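(* For every $T$-round DRACC instance with arbitrary valuation functions, the corresponding Dd-MDP is $O\!\left(T^{\frac{CW}{CW+1}}\right)$-chasable (with respect to arbitrary target pricing policies).
   Context: DRACC problem: there are $N$ resources and $T$ users arriving in rounds $t=1,\dots,T$. Resource $i\in[N]$ arrives at the start of round $t_a(i)$ and departs at the end of round $t_e(i)$ ($1\le t_a(i)\le t_e(i)\le T$), with capacity $c(i)\in\mathbb{Z}_{>0}$ units on arrival. $A_t\subseteq[N]$ is the set of resources active at time $t$. $C\ge\max_i c(i)$ and $W\ge\max_t|A_t|$ are known upper bounds independent of $T$. User $t$ has a valuation $v_t:2^{A_t}\to[0,1)$ with $v_t(\emptyset)=0$ and is quasi-linear. In round $t$ a mechanism posts $\bm p_t\in(0,1]^{A_t}$; user $t$ receives one unit of each resource in the demand set $\hat A^{\bm p}_t=\arg\max_{A\subseteq A_t}\{v_t(A)-\sum_{i\in A}\bm p(i)\}$ (ties broken lexicographically) and pays $\hat q^{\bm p}_t=\sum_{i\in\hat A^{\bm p}_t}\bm p(i)$; $v_t$ is revealed after posting. The inventory vector $\bm\lambda_t\in\{0,\dots,C\}^{A_t}$ has $\bm\lambda_t(i)=c(i)$ if $t_a(i)=t$ and $\bm\lambda_{t+1}(i)=\bm\lambda_t(i)-\mathbb{1}[i\in\hat A^{\bm p_t}_t]$ for $i\in A_t\cap A_{t+1}$. A price vector $\bm p$ is feasible for $\bm\lambda$ if $\bm p(i)=1$ whenever $\bm\lambda(i)=0$; posted prices must be feasible. A pricing policy maps each inventory vector to a feasible price vector. All instance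 data are chosen by an adaptive adversary. Corresponding Dd-MDP: states are inventory vectors; feasible actions are feasible price vectors; reward $f_t(s,x)=\hat q^x_t$; transition $g_t(s,x)=s'$ with $s'(i)=s(i)-\mathbb{1}[i\in\hat A^x_t]$ for $i\in A_{t+1}\cap A_t$ and $s'(i)=c(i)$ for $i\in A_{t+1}\setminus A_t$. Policy simulation: $s^\gamma_1=s_1$, $x^\gamma_t=\gamma(s^\gamma_t)$, $s^\gamma_{t+1}=g_t(s^\gamma_t,x^\gamma_t)$. $\sigma$-chasability: there is a (possibly randomized) chasing oracle such that for any target policy $\gamma$, any round $t_{\mathrm{init}}$ and any initial state $s_{\mathrm{init}}$, it outputs in each round $t\ge t_{\mathrm{init}}$ an action $\hat x(t)$ feasible for $\hat s(t)$, where $\hat s(t_{\mathrm{init}})=s_{\mathrm{init}}$, $\hat s(t)=g_{t-1}(\hat s(t-1),\hat x(t-1))$, and afterwards observes $g_t,f_t$; and for every $t_{\mathrm{final}}\ge t_{\mathrm{init}}$, $\sum_{t=t_{\mathrm{init}}}^{t_{\mathrm{final}}}f_t(s^\gamma_t,x^\gamma_t)-\sum_{t=t_{\mathrm{init}}}^{t_{\mathrm{final}}}\mathbb{E}[f_t(\hat s(t),\hat x(t))]\le\sigma$. *)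

theory Defs
  imports "HOL-Probability.Probability"
begin

(* Inventory vectors / states: partial maps, domain = active resources A_t *)
type_synonym inv = "nat \<rightharpoonup> nat"
(* Price vectors / actions: partial maps, domain = A_t *)
type_synonym prices = "nat \<rightharpoonup> real"

(* Data the (adaptive) adversary fixes for round t:
   the active set A_t, capacities c(i) (relevant for i arriving at t), valuation v_t *)
record round_data =
  rd_act :: "nat set"
  rd_cap :: "nat \<Rightarrow> nat"
  rd_val :: "nat set \<Rightarrow> real"

definition util :: "(nat set \<Rightarrow> real) \<Rightarrow> prices \<Rightarrow> nat set \<Rightarrow> real" where
  "util v p B = v B - (\<Sum>i\<in>B. the (p i))"

definition demand :: "round_data \<Rightarrow> prices \<Rightarrow> nat set" where
  "demand r p =
    (let M = {B. B \<subseteq> rd_act r \<and>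
                 (\<forall>B'. B' \<subseteq> rd_act r \<longrightarrow> util (rd_val r) p B' \<le> util (rd_val r) p B)}
     in THE D. D \<in> M \<and> (\<forall>D'\<in>M. lexordp_eq (sorted_list_of_set D) (sorted_list_of_set D')))"

(* payment = reward f_t(s,x) *)
definition payment :: "round_data \<Rightarrow> prices \<Rightarrow> real" where
  "payment r p = (\<Sum>i\<in>demand r p. the (p i))"

definition feasible :: "inv \<Rightarrow> prices \<Rightarrow> bool" where
  "feasible s p \<longleftrightarrow> dom p = dom s \<and>
     (\<forall>i\<in>dom s. 0 < the (p i) \<and> the (p i) \<le> 1 \<and> (s i = Some 0 \<longrightarrow> p i = Some 1))"

(* transition g_t, using data of rounds t (r) and t+1 (r') *)
definition trans :: "round_data \<Rightarrow> round_data \<Rightarrow> inv \<Rightarrow> prices \<Rightarrow> inv" where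
  "trans r r' s p = (\<lambda>i. if i \<in> rd_act r' then
       (if i \<in> rd_act r then Some (the (s i) - (if i \<in> demand r p then 1 else 0))
        else Some (rd_cap r' i))
     else None)"

definition init_state :: "round_data \<Rightarrow> inv" where
  "init_state r = (\<lambda>i. if i \<in> rd_act r then Some (rd_cap r i) else None)"

(* pol_state d \<gamma> n = state s^\<gamma>_{n+1} of the policy simulation started at s_1 *)
primrec pol_state :: "(nat \<Rightarrow> round_data) \<Rightarrow> (inv \<Rightarrow> prices) \<Rightarrow> nat \<Rightarrow> inv" where
  "pol_state d \<gamma> 0 = init_state (d 1)"
| "pol_state d \<gamma> (Suc n) =
     trans (d (Suc n)) (d (Suc (Suc n))) (pol_state d \<gamma> n) (\<gamma> (pol_state d \<gamma> n))"

definition target_state :: "(nat \<Rightarrow> round_data) \<Rightarrow> (inv \<Rightarrow> prices) \<Rightarrow> nat \<Rightarrow> inv" where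
  "target_state d \<gamma> t = pol_state d \<gamma> (t - 1)"

definition valid_instance :: "nat \<Rightarrow> nat \<Rightarrow> nat \<Rightarrow> (nat \<Rightarrow> round_data) \<Rightarrow> bool" where
  "valid_instance C W T d \<longleftrightarrow>
     (\<forall>t\<in>{1..T}. finite (rd_act (d t)) \<and> card (rd_act (d t)) \<le> W) \<and>
     (\<forall>i t1 t t2. 1 \<le> t1 \<and> t1 \<le> t \<and> t \<le> t2 \<and> t2 \<le> T \<and>
        i \<in> rd_act (d t1) \<and> i \<in> rd_act (d t2) \<longrightarrow> i \<in> rd_act (d t)) \<and>
     (\<forall>t\<in>{1..T}. \<forall>i\<in>rd_act (d t). (t = 1 \<or> i \<notin> rd_act (d (t - 1))) \<longrightarrow>
        0 < rd_cap (d t) i \<and> rd_cap (d t) i \<le> C) \<and>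
     (\<forall>t\<in>{1..T}. rd_val (d t) {} = 0 \<and>
        (\<forall>B. B \<subseteq> rd_act (d t) \<longrightarrow> 0 \<le> rd_val (d t) B \<and> rd_val (d t) B < 1))"

(* deterministic oracle strategy: (round t, observed data of rounds 1..t-1, current state) \<mapsto> prices *)
type_synonym strategy = "nat \<Rightarrow> round_data list \<Rightarrow> inv \<Rightarrow> prices"
(* adaptive adversary: (round t, oracle's realized prices in rounds t_init..t-1) \<mapsto> data of round t *)
type_synonym adversary = "nat \<Rightarrow> prices list \<Rightarrow> round_data"

definition rdata :: "adversary \<Rightarrow> nat \<Rightarrow> prices list \<Rightarrow> nat \<Rightarrow> round_data" where
  "rdata adv t0 xs \<tau> = adv \<tau> (take (\<tau> - t0) xs)"

(* ohist \<omega> adv t0 s0 n = (oracle state at round t0+n, oracle actions in rounds t0..t0+n-1) *)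
primrec ohist :: "strategy \<Rightarrow> adversary \<Rightarrow> nat \<Rightarrow> inv \<Rightarrow> nat \<Rightarrow> inv \<times> prices list" where
  "ohist \<omega> adv t0 s0 0 = (s0, [])"
| "ohist \<omega> adv t0 s0 (Suc n) =
     (let s = fst (ohist \<omega> adv t0 s0 n); xs = snd (ohist \<omega> adv t0 s0 n); t = t0 + n;
          x = \<omega> t (map (rdata adv t0 xs) [1..<t]) s; xs' = xs @ [x]
      in (trans (adv t xs) (adv (Suc t) xs') s x, xs'))"

definition oracle_actions :: "strategy \<Rightarrow> adversary \<Rightarrow> nat \<Rightarrow> inv \<Rightarrow> nat \<Rightarrow> prices list" where
  "oracle_actions \<omega> adv t0 s0 T = snd (ohist \<omega> adv t0 s0 (Suc T - t0))"

definition chase_gap :: "(inv \<Rightarrow> prices) \<Rightarrow> strategy \<Rightarrow> adversary \<Rightarrow> nat \<Rightarrow> inv \<Rightarrow> nat \<Rightarrow> nat \<Rightarrow> real" where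
  "chase_gap \<gamma> \<omega> adv t0 s0 T tf =
     (let xs = oracle_actions \<omega> adv t0 s0 T; d = rdata adv t0 xs
      in \<Sum>t\<in>{t0..tf}. payment (d t) (\<gamma> (target_state d \<gamma> t)) - payment (d t) (xs ! (t - t0)))"

end

theory Submission
  imports Defs
begin

(* In every round the oracle tosses a coin with bias e. On heads it freezes: it posts price 1
   everywhere, so that nobody buys. On tails it copies the prices of the target policy, raised
   to 1 on the resources it has run out of. Let the gap be the number of units by which the
   target's inventory exceeds the oracle's; it never exceeds C W. A tails round sells exactly
   what the target sells unless the target sells a unit the oracle no longer has, and in that
   case heads would strictly decrease the gap, which never grows otherwise. With the potential
   Y (1 - e ^ min gap (C W)), where Y (1 - e) e ^ (C W) = 1, regret plus potential grows by at
   most e per round in expectation, so the expected regret is at most 1 + Y + T e, and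
   e = T ^ (-1 / (C W + 1)) / 2 makes this O(T ^ (C W / (C W + 1))). *)

section \<open>Expectations over finite coin sequences\<close>

lemma integral_bind_pmf_finite:
  fixes f :: "'b \<Rightarrow> real"
  assumes fin_M: "finite (set_pmf M)" and fin_N: "\<And>x. x \<in> set_pmf M \<Longrightarrow> finite (set_pmf (N x))"
  shows "measure_pmf.expectation (bind_pmf M N) f
       = measure_pmf.expectation M (\<lambda>x. measure_pmf.expectation (N x) f)"
proof -
  define A where "A = (\<Union>x\<in>set_pmf M. set_pmf (N x))"
  have fin_A: "finite A" using fin_M fin_N by (auto simp: A_def)
  have N_sum: "measure_pmf.expectation (N x) f = (\<Sum>a\<in>A. pmf (N x) a * f a)" if "x \<in> set_pmf M" for x
    using that by (subst integral_measure_pmf[OF fin_A]) (auto simp: A_def)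
  have "measure_pmf.expectation (bind_pmf M N) f = (\<Sum>a\<in>A. pmf (bind_pmf M N) a * f a)"
    by (subst integral_measure_pmf[OF fin_A]) (auto simp: A_def)
  also have "\<dots> = (\<Sum>a\<in>A. measure_pmf.expectation M (\<lambda>x. pmf (N x) a * f a))"
    by (simp add: pmf_bind)
  also have "\<dots> = measure_pmf.expectation M (\<lambda>x. \<Sum>a\<in>A. pmf (N x) a * f a)"
    by (simp add: integrable_measure_pmf_finite[OF fin_M])
  also have "\<dots> = measure_pmf.expectation M (\<lambda>x. measure_pmf.expectation (N x) f)"
    using N_sum by (intro integral_cong_AE) (auto intro: AE_pmfI)
  finally show ?thesis .
qed

lemma expectation_mono_finite_pmf:
  fixes f g :: "'a \<Rightarrow> real"
  assumes "finite (set_pmf M)" "\<And>x. x \<in> set_pmf M \<Longrightarrow> f x \<le> g x"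
  shows "measure_pmf.expectation M f \<le> measure_pmf.expectation M g"
  by (rule integral_mono_AE) (auto intro!: integrable_measure_pmf_finite AE_pmfI assms)

lemma expectation_add_const_finite_pmf:
  fixes f :: "'a \<Rightarrow> real"
  assumes "finite (set_pmf M)"
  shows "measure_pmf.expectation M (\<lambda>x. f x + c) = measure_pmf.expectation M f + c"
  using assms by (subst Bochner_Integration.integral_add) (auto intro!: integrable_measure_pmf_finite)

lemma length_replicate_pmf: "xs \<in> set_pmf (replicate_pmf n p) \<Longrightarrow> length xs = n"
  by (simp add: set_replicate_pmf)

lemma finite_set_replicate_pmf: "finite (set_pmf (replicate_pmf n (p :: 'a :: finite pmf)))"
  by (rule finite_subset[OF _ finite_list_length[of n]]) (auto simp: set_replicate_pmf)

lemma replicate_pmf_Suc_snoc: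
  "replicate_pmf (Suc n) p = bind_pmf (replicate_pmf n p) (\<lambda>xs. map_pmf (\<lambda>x. xs @ [x]) p)"
  using replicate_pmf_distrib[of n 1 p]
  by (simp add: replicate_pmf_1 map_pmf_def bind_assoc_pmf bind_return_pmf)

lemma map_take_replicate_pmf: "map_pmf (take n) (replicate_pmf (n + k) p) = replicate_pmf n p"
proof -
  have "map_pmf (take n) (replicate_pmf (n + k) p)
      = bind_pmf (replicate_pmf n p) (\<lambda>xs. bind_pmf (replicate_pmf k p) (\<lambda>_. return_pmf xs))"
    unfolding replicate_pmf_distrib map_bind_pmf
    by (intro bind_pmf_cong refl) (simp add: map_bind_pmf length_replicate_pmf)
  then show ?thesis by (simp add: bind_return_pmf')
qed

lemma expectation_replicate_bernoulli_Suc: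
  fixes f :: "bool list \<Rightarrow> real"
  assumes "0 \<le> e" "e \<le> 1"
  shows "measure_pmf.expectation (replicate_pmf (Suc n) (bernoulli_pmf e)) f
       = measure_pmf.expectation (replicate_pmf n (bernoulli_pmf e))
           (\<lambda>xs. e * f (xs @ [True]) + (1 - e) * f (xs @ [False]))"
  unfolding replicate_pmf_Suc_snoc
  using assms by (subst integral_bind_pmf_finite) (auto simp: finite_set_replicate_pmf algebra_simps)

section \<open>Demand sets\<close>

definition utility_maximisers :: "round_data \<Rightarrow> prices \<Rightarrow> nat set set" where
  "utility_maximisers r p = {B. B \<subseteq> rd_act r \<and>
     (\<forall>B'. B' \<subseteq> rd_act r \<longrightarrow> util (rd_val r) p B' \<le> util (rd_val r) p B)}"

definition lex_least_maximiser :: "round_data \<Rightarrow> prices \<Rightarrow> nat set \<Rightarrow> bool" where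
  "lex_least_maximiser r p D \<longleftrightarrow> D \<in> utility_maximisers r p \<and>
     (\<forall>D'\<in>utility_maximisers r p. lexordp_eq (sorted_list_of_set D) (sorted_list_of_set D'))"

lemma demand_eq_The: "demand r p = (THE D. lex_least_maximiser r p D)"
  unfolding demand_def lex_least_maximiser_def utility_maximisers_def by simp

lemma ex_lexordp_eq_least:
  fixes L :: "'a :: linorder list set"
  assumes "finite L" "L \<noteq> {}"
  shows "\<exists>x\<in>L. \<forall>y\<in>L. lexordp_eq x y"
  using assms
proof (induction L rule: finite_ne_induct)
  case (singleton x)
  then show ?case by (simp add: lexordp_eq_refl)
next
  case (insert a L)
  then obtain x where x: "x \<in> L" "\<forall>y\<in>L. lexordp_eq x y" by blast
  show ?case
  proof (cases "lexordp_eq a x")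
    case True
    then show ?thesis using x by (auto simp: lexordp_eq_refl intro: lexordp_eq_trans)
  next
    case False
    then have "lexordp_eq x a" using lexordp_eq_linear by blast
    then show ?thesis using x by auto
  qed
qed

lemma finite_utility_maximisers:
  assumes "finite (rd_act r)"
  shows "finite (utility_maximisers r p)" "D \<in> utility_maximisers r p \<Longrightarrow> finite D"
  using assms by (auto simp: utility_maximisers_def intro: finite_subset)

lemma utility_maximisers_nonempty:
  assumes "finite (rd_act r)"
  shows "utility_maximisers r p \<noteq> {}"
proof -
  let ?u = "util (rd_val r) p"
  have fin: "finite (?u ` Pow (rd_act r))" using assms by simp
  have "Max (?u ` Pow (rd_act r)) \<in> ?u ` Pow (rd_act r)" using fin by (intro Max_in) auto
  then obtain B where B: "B \<in> Pow (rd_act r)" "Max (?u ` Pow (rd_act r)) = ?u B" by (rule imageE)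
  have "?u B' \<le> ?u B" if "B' \<subseteq> rd_act r" for B'
    unfolding B(2)[symmetric] using that by (intro Max_ge[OF fin]) simp
  then have "B \<in> utility_maximisers r p" using B(1) unfolding utility_maximisers_def by blast
  then show ?thesis by blast
qed

lemma lex_least_maximiser_unique:
  assumes "finite (rd_act r)" "lex_least_maximiser r p D" "lex_least_maximiser r p D'"
  shows "D = D'"
proof -
  have "sorted_list_of_set D = sorted_list_of_set D'"
    using assms(2,3) lexordp_eq_antisym unfolding lex_least_maximiser_def by blast
  moreover have "finite D" "finite D'"
    using assms finite_utility_maximisers(2) unfolding lex_least_maximiser_def by auto
  ultimately show ?thesis by (metis set_sorted_list_of_set)
qed

lemma demand_eqI:
  assumes "finite (rd_act r)" "lex_least_maximiser r p D"
  shows "demand r p = D"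
  unfolding demand_eq_The
  using assms(2) lex_least_maximiser_unique[OF assms(1) _ assms(2)] by (rule the_equality)

lemma lex_least_maximiser_demand:
  assumes "finite (rd_act r)"
  shows "lex_least_maximiser r p (demand r p)"
proof -
  let ?L = "sorted_list_of_set ` utility_maximisers r p"
  have "finite ?L" "?L \<noteq> {}"
    using finite_utility_maximisers(1)[OF assms] utility_maximisers_nonempty[OF assms] by auto
  then obtain x where x: "x \<in> ?L" "\<forall>y\<in>?L. lexordp_eq x y"
    using ex_lexordp_eq_least by blast
  then obtain D where "D \<in> utility_maximisers r p" "x = sorted_list_of_set D" by blast
  then have D: "lex_least_maximiser r p D" using x(2) unfolding lex_least_maximiser_def by simp
  then have "demand r p = D" by (rule demand_eqI[OF assms])
  then show ?thesis using D by simp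
qed

lemma demand_utility_maximiser:
  "finite (rd_act r) \<Longrightarrow> demand r p \<in> utility_maximisers r p"
  using lex_least_maximiser_demand unfolding lex_least_maximiser_def by blast

lemma demand_subset: "finite (rd_act r) \<Longrightarrow> demand r p \<subseteq> rd_act r"
  using demand_utility_maximiser unfolding utility_maximisers_def by blast

text \<open>Raising prices only outside the demand set lowers every other bundle's utility but not the
  demand set's, so the set of maximisers can only shrink and the lexicographic choice survives.\<close>

lemma demand_raise_prices_outside:
  assumes fin: "finite (rd_act r)"
    and le: "\<forall>i\<in>rd_act r. the (p i) \<le> the (p' i)"
    and eq: "\<forall>i\<in>demand r p. p' i = p i"
  shows "demand r p' = demand r p"
proof (rule demand_eqI[OF fin])
  let ?D = "demand r p" and ?M = "utility_maximisers r p" and ?M' = "utility_maximisers r p'"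
  let ?u = "util (rd_val r) p" and ?u' = "util (rd_val r) p'"
  have D_sub: "?D \<subseteq> rd_act r" by (rule demand_subset[OF fin])
  have D_max: "?u B \<le> ?u ?D" if "B \<subseteq> rd_act r" for B
    using demand_utility_maximiser[OF fin] that unfolding utility_maximisers_def by blast
  have u'_le: "?u' B \<le> ?u B" if "B \<subseteq> rd_act r" for B
    using le that unfolding util_def by (auto intro!: sum_mono)
  have u'_D: "?u' ?D = ?u ?D" unfolding util_def using eq by (auto intro!: sum.cong)
  have "?u' B \<le> ?u' ?D" if "B \<subseteq> rd_act r" for B
    using u'_le[OF that] D_max[OF that] u'_D by linarith
  then have D_max': "?D \<in> ?M'" using D_sub unfolding utility_maximisers_def by blast
  have "?M' \<subseteq> ?M"
  proof
    fix D' assume "D' \<in> ?M'"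
    then have D'_sub: "D' \<subseteq> rd_act r" and "?u' ?D \<le> ?u' D'"
      using D_sub unfolding utility_maximisers_def by auto
    then have "?u B \<le> ?u D'" if "B \<subseteq> rd_act r" for B
      using D_max[OF that] u'_D u'_le[OF D'_sub] by linarith
    then show "D' \<in> ?M" using D'_sub unfolding utility_maximisers_def by blast
  qed
  then show "lex_least_maximiser r p' ?D"
    using lex_least_maximiser_demand[OF fin] D_max' unfolding lex_least_maximiser_def by blast
qed

lemma
  assumes fin: "finite (rd_act r)" and val_empty: "rd_val r {} = 0"
    and val_lt_1: "\<forall>B. B \<subseteq> rd_act r \<longrightarrow> rd_val r B < 1"
    and pos: "\<forall>i\<in>rd_act r. 0 < the (p i)"
  shows payment_lt_1: "payment r p < 1"
    and payment_nonneg: "0 \<le> payment r p"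
    and price_lt_1_if_demanded: "i \<in> demand r p \<Longrightarrow> the (p i) < 1"
proof -
  let ?D = "demand r p"
  have D_sub: "?D \<subseteq> rd_act r" by (rule demand_subset[OF fin])
  have "util (rd_val r) p {} \<le> util (rd_val r) p ?D"
    using demand_utility_maximiser[OF fin] unfolding utility_maximisers_def by auto
  then have "payment r p \<le> rd_val r ?D" unfolding util_def payment_def using val_empty by simp
  moreover have "rd_val r ?D < 1" using val_lt_1 D_sub by blast
  ultimately show lt: "payment r p < 1" by linarith
  show "0 \<le> payment r p" unfolding payment_def using pos D_sub
    by (intro sum_nonneg) (auto simp: less_imp_le)
  assume i: "i \<in> ?D"
  have "the (p i) \<le> payment r p" unfolding payment_def
    using pos D_sub i finite_subset[OF D_sub fin] by (intro member_le_sum) (auto simp: less_imp_le)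
  then show "the (p i) < 1" using lt by simp
qed

section \<open>Inventory dynamics under frozen and copied prices\<close>

lemma dom_trans: "dom (trans r r' s p) = rd_act r'"
  by (auto simp: trans_def split: if_splits)

lemma dom_init_state: "dom (init_state r) = rd_act r"
  by (auto simp: init_state_def split: if_splits)

lemma dom_pol_state: "dom (pol_state d \<gamma> n) = rd_act (d (Suc n))"
  by (cases n) (auto simp: dom_init_state dom_trans)

definition freeze_prices :: "inv \<Rightarrow> prices" where
  "freeze_prices s = (\<lambda>i. if i \<in> dom s then Some 1 else None)"

definition copy_prices :: "inv \<Rightarrow> prices \<Rightarrow> prices" where
  "copy_prices s p = (\<lambda>i. if i \<in> dom s then (if s i = Some 0 then Some 1 else p i) else None)"

text \<open>Truncated subtraction: only the units the target holds in excess of the oracle count.\<close>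

definition inventory_gap :: "inv \<Rightarrow> inv \<Rightarrow> nat" where
  "inventory_gap sh sg = (\<Sum>i\<in>dom sh. the (sg i) - the (sh i))"

lemma feasible_freeze_prices: "feasible s (freeze_prices s)"
  unfolding feasible_def by (auto simp: freeze_prices_def split: if_splits)

lemma feasible_copy_prices:
  assumes "dom s' = dom s" "feasible s' p"
  shows "feasible s (copy_prices s p)"
proof -
  have "dom p = dom s" using assms unfolding feasible_def by simp
  then have "dom (copy_prices s p) = dom s" by (force simp: copy_prices_def split: if_splits)
  then show ?thesis using assms unfolding feasible_def by (auto simp: copy_prices_def)
qed

lemma
  assumes fin: "finite (rd_act r)" and val_empty: "rd_val r {} = 0"
    and val_lt_1: "\<forall>B. B \<subseteq> rd_act r \<longrightarrow> rd_val r B < 1" and dom_s: "dom s = rd_act r"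
  shows demand_freeze_prices: "demand r (freeze_prices s) = {}"
    and payment_freeze_prices: "payment r (freeze_prices s) = 0"
proof -
  have pos: "\<forall>i\<in>rd_act r. 0 < the (freeze_prices s i)" using dom_s by (auto simp: freeze_prices_def)
  have "i \<notin> demand r (freeze_prices s)" for i
  proof
    assume i: "i \<in> demand r (freeze_prices s)"
    then have "i \<in> dom s" using demand_subset[OF fin] dom_s by blast
    then show False
      using price_lt_1_if_demanded[OF fin val_empty val_lt_1 pos i] by (simp add: freeze_prices_def)
  qed
  then show "demand r (freeze_prices s) = {}" by blast
  then show "payment r (freeze_prices s) = 0" by (simp add: payment_def)
qed

lemma inventory_gap_trans_le:
  assumes fin: "finite (rd_act r)" and dom_sh: "dom sh = rd_act r"
  shows "inventory_gap (trans r r' sh x) (trans r r' sg p)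
     \<le> (\<Sum>i\<in>rd_act r. (the (sg i) - (if i \<in> demand r p then 1 else 0))
                      - (the (sh i) - (if i \<in> demand r x then 1 else 0)))"
proof (cases "finite (rd_act r')")
  case False
  then show ?thesis by (simp add: inventory_gap_def dom_trans)
next
  case True
  define f where "f i = (the (sg i) - (if i \<in> demand r p then 1 else 0))
                      - (the (sh i) - (if i \<in> demand r x then 1 else 0))" for i
  have "inventory_gap (trans r r' sh x) (trans r r' sg p)
      = (\<Sum>i\<in>rd_act r'. if i \<in> rd_act r then f i else 0)"
    unfolding inventory_gap_def dom_trans by (rule sum.cong) (auto simp: trans_def f_def)
  also have "\<dots> = (\<Sum>i\<in>rd_act r' \<inter> rd_act r. f i)"
    using True by (simp add: sum.inter_restrict)
  also have "\<dots> \<le> (\<Sum>i\<in>rd_act r. f i)"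
    using fin by (intro sum_mono2) auto
  finally show ?thesis unfolding f_def .
qed

lemma inventory_gap_le:
  assumes "card (dom sh) \<le> W" and "\<forall>i\<in>dom sh. the (sg i) \<le> C"
  shows "inventory_gap sh sg \<le> C * W"
proof -
  have "inventory_gap sh sg \<le> (\<Sum>i\<in>dom sh. C)"
    unfolding inventory_gap_def using assms(2) by (intro sum_mono) (meson diff_le_self le_trans)
  also have "\<dots> \<le> C * W" using assms(1) by simp
  finally show ?thesis .
qed

lemma demanded_resource_available:
  assumes fin: "finite (rd_act r)" and val_empty: "rd_val r {} = 0"
    and val_lt_1: "\<forall>B. B \<subseteq> rd_act r \<longrightarrow> rd_val r B < 1"
    and dom_s: "dom s = rd_act r" and feas: "feasible s p" and i: "i \<in> demand r p"
  shows "1 \<le> the (s i)"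
proof -
  have i_act: "i \<in> rd_act r" using i demand_subset[OF fin] by blast
  have pos: "\<forall>i\<in>rd_act r. 0 < the (p i)" using feas dom_s unfolding feasible_def by auto
  have "s i \<noteq> Some 0"
  proof
    assume "s i = Some 0"
    then have "p i = Some 1" using feas i_act dom_s unfolding feasible_def by auto
    then show False using price_lt_1_if_demanded[OF fin val_empty val_lt_1 pos i] by simp
  qed
  then show ?thesis using i_act dom_s by (cases "s i") auto
qed

lemma
  assumes fin: "finite (rd_act r)" and val_empty: "rd_val r {} = 0"
    and val_lt_1: "\<forall>B. B \<subseteq> rd_act r \<longrightarrow> rd_val r B < 1"
    and dom_sh: "dom sh = rd_act r" and dom_sg: "dom sg = rd_act r" and feas: "feasible sg p"
  shows inventory_gap_freeze_le:
      "inventory_gap (trans r r' sh (freeze_prices sh)) (trans r r' sg p) \<le> inventory_gap sh sg"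
    and inventory_gap_freeze_less:
      "i \<in> demand r p \<Longrightarrow> sh i = Some 0
        \<Longrightarrow> inventory_gap (trans r r' sh (freeze_prices sh)) (trans r r' sg p) < inventory_gap sh sg"
proof -
  let ?D = "demand r p"
  define after where "after i = (the (sg i) - (if i \<in> ?D then 1 else 0)) - the (sh i)" for i
  have gap: "inventory_gap sh sg = (\<Sum>i\<in>rd_act r. the (sg i) - the (sh i))"
    unfolding inventory_gap_def dom_sh ..
  have gap_le: "inventory_gap (trans r r' sh (freeze_prices sh)) (trans r r' sg p) \<le> sum after (rd_act r)"
    using inventory_gap_trans_le[OF fin dom_sh, of r' "freeze_prices sh" sg p]
    unfolding demand_freeze_prices[OF fin val_empty val_lt_1 dom_sh] after_def by simp
  moreover have "sum after (rd_act r) \<le> inventory_gap sh sg"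
    unfolding gap after_def by (intro sum_mono) auto
  ultimately show "inventory_gap (trans r r' sh (freeze_prices sh)) (trans r r' sg p) \<le> inventory_gap sh sg"
    by linarith
  assume i: "i \<in> ?D" and empty: "sh i = Some 0"
  have i_act: "i \<in> rd_act r" using i demand_subset[OF fin] by blast
  have "1 \<le> the (sg i)" by (rule demanded_resource_available[OF fin val_empty val_lt_1 dom_sg feas i])
  then have "after i < the (sg i) - the (sh i)" using i empty unfolding after_def by simp
  moreover have "\<forall>j\<in>rd_act r. after j \<le> the (sg j) - the (sh j)" unfolding after_def by auto
  ultimately have "sum after (rd_act r) < inventory_gap sh sg"
    unfolding gap using i_act by (intro sum_strict_mono_ex1[OF fin]) blast+
  then show "inventory_gap (trans r r' sh (freeze_prices sh)) (trans r r' sg p) < inventory_gap sh sg"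
    using gap_le by linarith
qed

lemma
  assumes fin: "finite (rd_act r)"
    and dom_sh: "dom sh = rd_act r" and dom_sg: "dom sg = rd_act r" and feas: "feasible sg p"
    and stocked: "\<forall>i\<in>demand r p. sh i \<noteq> Some 0"
  shows payment_copy_prices: "payment r (copy_prices sh p) = payment r p"
    and inventory_gap_copy_le:
      "inventory_gap (trans r r' sh (copy_prices sh p)) (trans r r' sg p) \<le> inventory_gap sh sg"
proof -
  let ?D = "demand r p"
  have D_sub: "?D \<subseteq> rd_act r" by (rule demand_subset[OF fin])
  have le: "\<forall>i\<in>rd_act r. the (p i) \<le> the (copy_prices sh p i)"
    using feas dom_sg dom_sh unfolding feasible_def by (auto simp: copy_prices_def)
  have eq: "\<forall>i\<in>?D. copy_prices sh p i = p i"
    using stocked D_sub dom_sh by (auto simp: copy_prices_def)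
  have demand_eq: "demand r (copy_prices sh p) = ?D"
    by (rule demand_raise_prices_outside[OF fin le eq])
  show "payment r (copy_prices sh p) = payment r p"
    unfolding payment_def demand_eq using eq by (auto intro!: sum.cong)
  have "inventory_gap (trans r r' sh (copy_prices sh p)) (trans r r' sg p)
      \<le> (\<Sum>i\<in>rd_act r. (the (sg i) - (if i \<in> ?D then 1 else 0)) - (the (sh i) - (if i \<in> ?D then 1 else 0)))"
    using inventory_gap_trans_le[OF fin dom_sh, of r' "copy_prices sh p" sg p] unfolding demand_eq .
  also have "\<dots> \<le> inventory_gap sh sg"
    unfolding inventory_gap_def dom_sh by (intro sum_mono) auto
  finally show "inventory_gap (trans r r' sh (copy_prices sh p)) (trans r r' sg p) \<le> inventory_gap sh sg" .
qed

section \<open>The gap potential\<close>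

locale gap_potential =
  fixes e Y :: real and m :: nat
  assumes exploration_pos: "0 < e" and exploration_lt_1: "e < 1"
    and scale: "Y * ((1 - e) * e ^ m) = 1"
begin

definition potential :: "nat \<Rightarrow> real" where
  "potential \<phi> = Y * (1 - e ^ min \<phi> m)"

lemma scale_nonneg: "0 \<le> Y"
proof -
  have "0 < (1 - e) * e ^ m" using exploration_pos exploration_lt_1 by simp
  then show ?thesis using scale by (metis zero_less_mult_pos2 less_eq_real_def zero_less_one)
qed

lemma potential_mono: "a \<le> b \<Longrightarrow> potential a \<le> potential b"
  unfolding potential_def using exploration_pos exploration_lt_1 scale_nonneg
  by (intro mult_left_mono diff_left_mono power_decreasing) auto

lemma potential_le_saturated: "potential \<phi> \<le> Y * (1 - e ^ m)"
  using potential_mono[of \<phi> m] unfolding potential_def by (simp add: min_def split: if_splits)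

lemma potential_nonneg: "0 \<le> potential \<phi>"
  unfolding potential_def using exploration_pos exploration_lt_1 scale_nonneg
  by (simp add: power_le_one)

lemma potential_le_scale: "potential \<phi> \<le> Y"
  unfolding potential_def using exploration_pos scale_nonneg by (simp add: mult_left_le)

text \<open>By the normalisation of Y, the potential lost when a frozen round lowers the gap pays for a
  loss of at most 1 in either branch.\<close>

lemma potential_drift_decrease:
  assumes "\<phi> \<le> m" "\<phi>T < \<phi>" "c1 \<le> 1" "c2 \<le> 1"
  shows "(c1 + potential \<phi>T) * e + (c2 + potential \<phi>F) * (1 - e) \<le> potential \<phi> + e"
proof -
  define q where "q = e ^ (\<phi> - 1)"
  have "potential \<phi>T \<le> potential (\<phi> - 1)" using assms(2) by (intro potential_mono) auto
  also have "\<dots> = Y * (1 - q)" unfolding potential_def q_def using assms(1,2) by (simp add: min_def)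
  finally have T: "(c1 + potential \<phi>T) * e \<le> (1 + Y * (1 - q)) * e"
    using assms(3) exploration_pos by (intro mult_right_mono) auto
  have F: "(c2 + potential \<phi>F) * (1 - e) \<le> (1 + Y * (1 - e ^ m)) * (1 - e)"
    using assms(4) potential_le_saturated exploration_lt_1 by (intro mult_right_mono add_mono) auto
  have "e ^ \<phi> = e * q" unfolding q_def using assms(2) by (metis Suc_diff_1 gr_zeroI not_less0 power_Suc)
  then have "potential \<phi> = Y - Y * (e * q)" unfolding potential_def using assms(1) by (simp add: min_def algebra_simps)
  moreover have "(1 + Y * (1 - q)) * e + (1 + Y * (1 - e ^ m)) * (1 - e)
      = 1 + Y - Y * (e * q) - Y * ((1 - e) * e ^ m)"
    by (simp add: algebra_simps)
  ultimately show ?thesis using T F scale exploration_pos by linarith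
qed

lemma potential_drift_stable:
  assumes "\<phi>T \<le> \<phi>" "\<phi>F \<le> \<phi>" "c1 \<le> 1" "c2 \<le> 0"
  shows "(c1 + potential \<phi>T) * e + (c2 + potential \<phi>F) * (1 - e) \<le> potential \<phi> + e"
proof -
  have "(c1 + potential \<phi>T) * e \<le> (1 + potential \<phi>) * e"
    using assms(1,3) potential_mono exploration_pos by (intro mult_right_mono add_mono) auto
  moreover have "(c2 + potential \<phi>F) * (1 - e) \<le> potential \<phi> * (1 - e)"
    using assms(2,4) potential_mono exploration_lt_1 by (intro mult_right_mono) (auto intro: add_mono[of c2 0, simplified])
  ultimately show ?thesis by (simp add: algebra_simps)
qed

lemma round_drift:
  assumes fin: "finite (rd_act r)" and val_empty: "rd_val r {} = 0"
    and val_lt_1: "\<forall>B. B \<subseteq> rd_act r \<longrightarrow> rd_val r B < 1"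
    and dom_sh: "dom sh = rd_act r" and dom_sg: "dom sg = rd_act r" and feas: "feasible sg p"
    and gap_le: "inventory_gap sh sg \<le> m"
  shows "(payment r p - payment r (freeze_prices sh)
            + potential (inventory_gap (trans r rT sh (freeze_prices sh)) (trans r rT sg p))) * e
       + (payment r p - payment r (copy_prices sh p)
            + potential (inventory_gap (trans r rF sh (copy_prices sh p)) (trans r rF sg p))) * (1 - e)
       \<le> potential (inventory_gap sh sg) + e"
proof -
  have pos: "\<forall>i\<in>rd_act r. 0 < the (p i)" using feas dom_sg unfolding feasible_def by auto
  have pay_lt_1: "payment r p < 1" by (rule payment_lt_1[OF fin val_empty val_lt_1 pos])
  have freeze_cost: "payment r p - payment r (freeze_prices sh) \<le> 1"
    using pay_lt_1 payment_freeze_prices[OF fin val_empty val_lt_1 dom_sh] by simp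
  show ?thesis
  proof (cases "\<exists>i\<in>demand r p. sh i = Some 0")
    case True
    have copy_pos: "\<forall>i\<in>rd_act r. 0 < the (copy_prices sh p i)"
      using pos dom_sh by (auto simp: copy_prices_def)
    have "payment r p - payment r (copy_prices sh p) \<le> 1"
      using pay_lt_1 payment_nonneg[OF fin val_empty val_lt_1 copy_pos] by simp
    then show ?thesis
      using True inventory_gap_freeze_less[OF fin val_empty val_lt_1 dom_sh dom_sg feas]
      by (intro potential_drift_decrease gap_le freeze_cost) blast+
  next
    case False
    then have stocked: "\<forall>i\<in>demand r p. sh i \<noteq> Some 0" by blast
    show ?thesis
      using payment_copy_prices[OF fin dom_sh dom_sg feas stocked]
      by (intro potential_drift_stable freeze_cost
          inventory_gap_freeze_le[OF fin val_empty val_lt_1 dom_sh dom_sg feas]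
          inventory_gap_copy_le[OF fin dom_sh dom_sg feas stocked]) simp
  qed
qed

end

section \<open>Runs against an adaptive adversary\<close>

lemma trans_cong:
  assumes "rd_act r1 = rd_act r2" "\<forall>i\<in>rd_act r1 - rd_act r. rd_cap r1 i = rd_cap r2 i"
  shows "trans r r1 s p = trans r r2 s p"
  using assms unfolding trans_def by (auto intro!: ext)

lemma pol_state_cong:
  "(\<And>\<tau>. 1 \<le> \<tau> \<Longrightarrow> \<tau> \<le> Suc n \<Longrightarrow> d \<tau> = d' \<tau>) \<Longrightarrow> pol_state d \<gamma> n = pol_state d' \<gamma> n"
proof (induction n)
  case (Suc n)
  then have "pol_state d \<gamma> n = pol_state d' \<gamma> n" by simp
  moreover have "d (Suc n) = d' (Suc n)" "d (Suc (Suc n)) = d' (Suc (Suc n))" using Suc.prems by auto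
  ultimately show ?case by simp
qed simp

lemma pol_state_Suc_cong:
  assumes "\<And>\<tau>. 1 \<le> \<tau> \<Longrightarrow> \<tau> \<le> Suc n \<Longrightarrow> d \<tau> = d' \<tau>"
    and "rd_act (d (Suc (Suc n))) = rd_act (d' (Suc (Suc n)))"
    and "\<forall>i\<in>rd_act (d (Suc (Suc n))) - rd_act (d (Suc n)).
           rd_cap (d (Suc (Suc n))) i = rd_cap (d' (Suc (Suc n))) i"
  shows "pol_state d \<gamma> (Suc n) = pol_state d' \<gamma> (Suc n)"
proof -
  have prev: "pol_state d \<gamma> n = pol_state d' \<gamma> n" by (rule pol_state_cong) (use assms(1) in auto)
  have now: "d (Suc n) = d' (Suc n)" using assms(1) by auto
  show ?thesis unfolding pol_state.simps prev now
    by (rule trans_cong) (use assms(2,3) now in auto)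
qed

lemma
  assumes "valid_instance C W T d" and "t \<in> {1..T}"
  shows valid_instance_finite: "finite (rd_act (d t))"
    and valid_instance_card: "card (rd_act (d t)) \<le> W"
    and valid_instance_capacity:
      "i \<in> rd_act (d t) \<Longrightarrow> t = 1 \<or> i \<notin> rd_act (d (t - 1)) \<Longrightarrow> rd_cap (d t) i \<le> C"
    and valid_instance_val_empty: "rd_val (d t) {} = 0"
    and valid_instance_val_lt_1: "\<forall>B. B \<subseteq> rd_act (d t) \<longrightarrow> rd_val (d t) B < 1"
  using assms unfolding valid_instance_def by blast+

lemma pol_state_le_capacity:
  assumes valid: "valid_instance C W T d" and "Suc n \<le> T"
  shows "\<forall>i\<in>dom (pol_state d \<gamma> n). the (pol_state d \<gamma> n i) \<le> C"
  using assms(2)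
proof (induction n)
  case 0
  have "rd_cap (d 1) i \<le> C" if "i \<in> rd_act (d 1)" for i
    using valid_instance_capacity[OF valid, of 1 i] that 0 by simp
  then show ?case by (simp add: dom_init_state) (simp add: init_state_def)
next
  case (Suc n)
  show ?case
  proof
    fix i assume "i \<in> dom (pol_state d \<gamma> (Suc n))"
    then have i: "i \<in> rd_act (d (Suc (Suc n)))" using dom_pol_state[of d \<gamma> "Suc n"] by blast
    show "the (pol_state d \<gamma> (Suc n) i) \<le> C"
    proof (cases "i \<in> rd_act (d (Suc n))")
      case True
      then have "the (pol_state d \<gamma> n i) \<le> C" using Suc by (simp add: dom_pol_state)
      then show ?thesis using i True by (simp add: trans_def)
    next
      case False
      then show ?thesis
        using i valid_instance_capacity[OF valid, of "Suc (Suc n)" i] Suc.prems by (simp add: trans_def)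
    qed
  qed
qed

lemma ohist_cong:
  "(\<And>j. j < k \<Longrightarrow> \<omega> (t0 + j) = \<omega>' (t0 + j)) \<Longrightarrow> ohist \<omega> adv t0 s0 k = ohist \<omega>' adv t0 s0 k"
  by (induction k) (auto simp: Let_def)

locale chasing_run =
  fixes C W T :: nat and \<gamma> :: "inv \<Rightarrow> prices" and t0 :: nat and s0 :: inv and adv :: adversary
  assumes target_feasible: "\<forall>s. feasible s (\<gamma> s)" and t0_pos: "1 \<le> t0" and t0_le: "t0 \<le> T"
    and dom_s0: "rd_act (adv t0 []) = dom s0"
    and valid: "\<forall>xs. length xs = Suc T - t0 \<longrightarrow> valid_instance C W T (rdata adv t0 xs)"
begin

abbreviation rounds :: nat where "rounds \<equiv> Suc T - t0"

definition run_state :: "strategy \<Rightarrow> nat \<Rightarrow> inv" where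
  "run_state \<omega> k = fst (ohist \<omega> adv t0 s0 k)"

definition run_actions :: "strategy \<Rightarrow> nat \<Rightarrow> prices list" where
  "run_actions \<omega> k = snd (ohist \<omega> adv t0 s0 k)"

definition run_data :: "strategy \<Rightarrow> nat \<Rightarrow> nat \<Rightarrow> round_data" where
  "run_data \<omega> k = rdata adv t0 (run_actions \<omega> k)"

definition run_action :: "strategy \<Rightarrow> nat \<Rightarrow> prices" where
  "run_action \<omega> k = \<omega> (t0 + k) (map (run_data \<omega> k) [1..<t0 + k]) (run_state \<omega> k)"

definition run_target :: "strategy \<Rightarrow> nat \<Rightarrow> inv" where
  "run_target \<omega> k = target_state (run_data \<omega> k) \<gamma> (t0 + k)"

lemma ohist_Suc_run:
  "ohist \<omega> adv t0 s0 (Suc k) =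
     (trans (adv (t0 + k) (run_actions \<omega> k)) (adv (Suc (t0 + k)) (run_actions \<omega> k @ [run_action \<omega> k]))
        (run_state \<omega> k) (run_action \<omega> k),
      run_actions \<omega> k @ [run_action \<omega> k])"
  by (simp add: run_state_def run_actions_def run_action_def run_data_def Let_def)

lemma run_actions_Suc: "run_actions \<omega> (Suc k) = run_actions \<omega> k @ [run_action \<omega> k]"
  unfolding run_actions_def[of \<omega> "Suc k"] ohist_Suc_run by simp

lemma length_run_actions: "length (run_actions \<omega> k) = k"
  by (induction k) (simp add: run_actions_def, simp add: run_actions_Suc)

lemma run_actions_prefix: "k \<le> j \<Longrightarrow> run_actions \<omega> k = take k (run_actions \<omega> j)"
proof (induction j)
  case 0
  then show ?case by (simp add: run_actions_def)
next
  case (Suc j)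
  show ?case
  proof (cases "k = Suc j")
    case True
    then show ?thesis by (simp add: length_run_actions)
  next
    case False
    then show ?thesis using Suc by (simp add: run_actions_Suc length_run_actions)
  qed
qed

lemma nth_run_actions: "j < k \<Longrightarrow> run_actions \<omega> k ! j = run_action \<omega> j"
proof -
  assume "j < k"
  then have "run_actions \<omega> k ! j = take (Suc j) (run_actions \<omega> k) ! j" by simp
  also have "\<dots> = run_actions \<omega> (Suc j) ! j" using \<open>j < k\<close> run_actions_prefix[of "Suc j" k \<omega>] by simp
  also have "\<dots> = run_action \<omega> j" by (simp add: run_actions_Suc nth_append length_run_actions)
  finally show ?thesis .
qed

lemma run_data_current: "run_data \<omega> k (t0 + k) = adv (t0 + k) (run_actions \<omega> k)"
  by (simp add: run_data_def rdata_def length_run_actions)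

lemma run_data_prefix: "k \<le> j \<Longrightarrow> \<tau> \<le> t0 + k \<Longrightarrow> run_data \<omega> j \<tau> = run_data \<omega> k \<tau>"
  unfolding run_data_def rdata_def using run_actions_prefix[of k j \<omega>] by (simp add: min_def)

lemma run_state_Suc:
  "run_state \<omega> (Suc k) =
     trans (run_data \<omega> k (t0 + k)) (run_data \<omega> (Suc k) (Suc (t0 + k))) (run_state \<omega> k) (run_action \<omega> k)"
proof -
  have "run_data \<omega> (Suc k) (Suc (t0 + k)) = adv (Suc (t0 + k)) (run_actions \<omega> k @ [run_action \<omega> k])"
    using run_data_current[of \<omega> "Suc k"] by (simp add: run_actions_Suc)
  then show ?thesis
    unfolding run_state_def[of \<omega> "Suc k"] ohist_Suc_run run_data_current by simp
qed

lemma dom_run_state: "dom (run_state \<omega> k) = rd_act (run_data \<omega> k (t0 + k))"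
proof (cases k)
  case 0
  then show ?thesis using dom_s0 by (simp add: run_state_def run_data_def rdata_def run_actions_def)
next
  case (Suc k')
  then show ?thesis by (simp add: run_state_Suc dom_trans)
qed

lemma run_state_arrival:
  assumes "i \<in> rd_act (run_data \<omega> (Suc k) (t0 + Suc k))" "i \<notin> rd_act (run_data \<omega> (Suc k) (t0 + k))"
  shows "run_state \<omega> (Suc k) i = Some (rd_cap (run_data \<omega> (Suc k) (t0 + Suc k)) i)"
proof -
  have "run_data \<omega> (Suc k) (t0 + k) = run_data \<omega> k (t0 + k)" by (rule run_data_prefix) auto
  then show ?thesis using assms by (simp add: run_state_Suc trans_def)
qed

lemma run_target_Suc:
  "run_target \<omega> (Suc k) =
     trans (run_data \<omega> k (t0 + k)) (run_data \<omega> (Suc k) (Suc (t0 + k))) (run_target \<omega> k) (\<gamma> (run_target \<omega> k))"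
proof -
  define n where "n = t0 + k - 1"
  have tn: "t0 + k = Suc n" using t0_pos unfolding n_def by simp
  have now: "run_data \<omega> (Suc k) (Suc n) = run_data \<omega> k (Suc n)"
    unfolding tn[symmetric] by (rule run_data_prefix) auto
  have prev: "pol_state (run_data \<omega> (Suc k)) \<gamma> n = pol_state (run_data \<omega> k) \<gamma> n"
    by (rule pol_state_cong) (auto intro!: run_data_prefix simp: tn[symmetric])
  have "run_target \<omega> (Suc k) = pol_state (run_data \<omega> (Suc k)) \<gamma> (Suc n)"
    unfolding run_target_def target_state_def using tn by simp
  also have "\<dots> = trans (run_data \<omega> k (Suc n)) (run_data \<omega> (Suc k) (Suc (Suc n)))
      (pol_state (run_data \<omega> k) \<gamma> n) (\<gamma> (pol_state (run_data \<omega> k) \<gamma> n))"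
    unfolding pol_state.simps now prev ..
  also have "pol_state (run_data \<omega> k) \<gamma> n = run_target \<omega> k"
    unfolding run_target_def target_state_def using tn by simp
  finally show ?thesis unfolding tn .
qed

definition agree_upto :: "strategy \<Rightarrow> strategy \<Rightarrow> nat \<Rightarrow> bool" where
  "agree_upto \<omega> \<omega>' k \<longleftrightarrow> (\<forall>j<k. \<omega> (t0 + j) = \<omega>' (t0 + j))"

lemma agree_upto_mono: "agree_upto \<omega> \<omega>' k \<Longrightarrow> j \<le> k \<Longrightarrow> agree_upto \<omega> \<omega>' j"
  unfolding agree_upto_def by auto

lemma
  assumes "agree_upto \<omega> \<omega>' k"
  shows agree_upto_run_state: "run_state \<omega> k = run_state \<omega>' k"
    and agree_upto_run_data: "run_data \<omega> k = run_data \<omega>' k"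
    and agree_upto_run_target: "run_target \<omega> k = run_target \<omega>' k"
proof -
  have ohist: "ohist \<omega> adv t0 s0 k = ohist \<omega>' adv t0 s0 k"
    using assms unfolding agree_upto_def by (intro ohist_cong) blast
  then show "run_state \<omega> k = run_state \<omega>' k" by (simp add: run_state_def)
  have "run_actions \<omega> k = run_actions \<omega>' k" using ohist by (simp add: run_actions_def)
  then show "run_data \<omega> k = run_data \<omega>' k" by (simp add: run_data_def)
  then show "run_target \<omega> k = run_target \<omega>' k" by (simp add: run_target_def)
qed

lemma agree_upto_run_action: "agree_upto \<omega> \<omega>' (Suc j) \<Longrightarrow> run_action \<omega> j = run_action \<omega>' j"
proof -
  assume agree: "agree_upto \<omega> \<omega>' (Suc j)"
  then have "agree_upto \<omega> \<omega>' j" by (rule agree_upto_mono) simp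
  moreover have "\<omega> (t0 + j) = \<omega>' (t0 + j)" using agree unfolding agree_upto_def by simp
  ultimately show ?thesis
    unfolding run_action_def using agree_upto_run_state agree_upto_run_data by simp
qed

text \<open>Validity is only assumed of complete action sequences, but the data of the rounds up to
  t0 + k cannot depend on later actions, so the actions taken so far may be padded arbitrarily.\<close>

definition padded :: "prices list \<Rightarrow> prices list" where
  "padded xs = xs @ replicate (rounds - length xs) undefined"

lemma
  assumes "k \<le> rounds"
  shows valid_instance_padded: "valid_instance C W T (rdata adv t0 (padded (run_actions \<omega> k)))"
    and rdata_padded: "\<tau> \<le> t0 + k \<Longrightarrow> rdata adv t0 (padded (run_actions \<omega> k)) \<tau> = run_data \<omega> k \<tau>"
proof -
  have "length (padded (run_actions \<omega> k)) = rounds" using assms by (simp add: padded_def length_run_actions)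
  then show "valid_instance C W T (rdata adv t0 (padded (run_actions \<omega> k)))" using valid by blast
  show "\<tau> \<le> t0 + k \<Longrightarrow> rdata adv t0 (padded (run_actions \<omega> k)) \<tau> = run_data \<omega> k \<tau>"
    unfolding padded_def run_data_def rdata_def by (simp add: length_run_actions)
qed

lemma
  assumes k: "k < rounds"
  shows run_data_finite: "finite (rd_act (run_data \<omega> k (t0 + k)))"
    and run_data_card: "card (rd_act (run_data \<omega> k (t0 + k))) \<le> W"
    and run_data_val_empty: "rd_val (run_data \<omega> k (t0 + k)) {} = 0"
    and run_data_val_lt_1: "\<forall>B. B \<subseteq> rd_act (run_data \<omega> k (t0 + k)) \<longrightarrow> rd_val (run_data \<omega> k (t0 + k)) B < 1"
    and dom_run_target: "dom (run_target \<omega> k) = rd_act (run_data \<omega> k (t0 + k))"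
    and run_target_le_capacity: "\<forall>i\<in>dom (run_target \<omega> k). the (run_target \<omega> k i) \<le> C"
proof -
  let ?d = "rdata adv t0 (padded (run_actions \<omega> k))"
  have valid_d: "valid_instance C W T ?d" using k by (intro valid_instance_padded) simp
  have t: "t0 + k \<in> {1..T}" using k t0_pos by auto
  have now: "?d (t0 + k) = run_data \<omega> k (t0 + k)" using k by (intro rdata_padded) simp_all
  show "finite (rd_act (run_data \<omega> k (t0 + k)))" "card (rd_act (run_data \<omega> k (t0 + k))) \<le> W"
      "rd_val (run_data \<omega> k (t0 + k)) {} = 0"
      "\<forall>B. B \<subseteq> rd_act (run_data \<omega> k (t0 + k)) \<longrightarrow> rd_val (run_data \<omega> k (t0 + k)) B < 1"
    using valid_instance_finite[OF valid_d t] valid_instance_card[OF valid_d t]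
      valid_instance_val_empty[OF valid_d t] valid_instance_val_lt_1[OF valid_d t]
    unfolding now by simp_all
  define n where "n = t0 + k - 1"
  have tn: "t0 + k = Suc n" using t0_pos unfolding n_def by simp
  have target: "run_target \<omega> k = pol_state ?d \<gamma> n"
    unfolding run_target_def target_state_def tn
    using k by (simp, intro pol_state_cong) (simp add: rdata_padded tn[symmetric])
  show "dom (run_target \<omega> k) = rd_act (run_data \<omega> k (t0 + k))"
    unfolding run_target_def target_state_def dom_pol_state using tn by simp
  show "\<forall>i\<in>dom (run_target \<omega> k). the (run_target \<omega> k i) \<le> C"
    unfolding target using tn t by (intro pol_state_le_capacity[OF valid_d]) simp
qed

end

section \<open>The chasing oracle\<close>

text \<open>In round t a strategy only sees the data of the earlier rounds, while the target's state in
  round t also depends on the capacities of the resources arriving in round t. These are exactly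
  the oracle's own inventories of those resources, so the oracle's current state stands in for
  the data of round t.\<close>

definition arrival_round :: "inv \<Rightarrow> round_data" where
  "arrival_round s = \<lparr>rd_act = dom s, rd_cap = (\<lambda>i. the (s i)), rd_val = (\<lambda>_. 0)\<rparr>"

definition guessed_data :: "nat \<Rightarrow> round_data list \<Rightarrow> inv \<Rightarrow> nat \<Rightarrow> round_data" where
  "guessed_data t hist s \<tau> = (if \<tau> < t then hist ! (\<tau> - 1) else arrival_round s)"

definition estimated_target :: "(inv \<Rightarrow> prices) \<Rightarrow> nat \<Rightarrow> round_data list \<Rightarrow> inv \<Rightarrow> inv" where
  "estimated_target \<gamma> t hist s = pol_state (guessed_data t hist s) \<gamma> (t - 1)"

text \<open>The coin cs ! k decides whether round t0 + k is frozen. The first round is always frozen,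
  since the oracle's initial state carries no information about arrivals.\<close>

definition chasing_strategy :: "(inv \<Rightarrow> prices) \<Rightarrow> nat \<Rightarrow> bool list \<Rightarrow> strategy" where
  "chasing_strategy \<gamma> t0 cs t hist s =
     (if t = t0 \<or> cs ! (t - t0) then freeze_prices s
      else copy_prices s (\<gamma> (estimated_target \<gamma> t hist s)))"

lemma dom_estimated_target: "1 \<le> t \<Longrightarrow> dom (estimated_target \<gamma> t hist s) = dom s"
  unfolding estimated_target_def dom_pol_state by (simp add: guessed_data_def arrival_round_def)

lemma feasible_chasing_strategy:
  assumes "\<forall>s. feasible s (\<gamma> s)" "1 \<le> t"
  shows "feasible s (chasing_strategy \<gamma> t0 cs t hist s)"
proof -
  have "feasible s (copy_prices s (\<gamma> (estimated_target \<gamma> t hist s)))"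
    using assms(1) feasible_copy_prices[OF dom_estimated_target[OF assms(2), of \<gamma> hist s]] by simp
  then show ?thesis by (simp add: chasing_strategy_def feasible_freeze_prices)
qed

context chasing_run
begin

lemma estimated_target_correct:
  assumes "1 \<le> k"
  shows "estimated_target \<gamma> (t0 + k) (map (run_data \<omega> k) [1..<t0 + k]) (run_state \<omega> k) = run_target \<omega> k"
proof -
  obtain j where k: "k = Suc j" using assms by (cases k) auto
  define n where "n = t0 + j - 1"
  have n: "t0 + j = Suc n" "t0 + k = Suc (Suc n)" using t0_pos k unfolding n_def by auto
  let ?g = "guessed_data (t0 + k) (map (run_data \<omega> k) [1..<t0 + k]) (run_state \<omega> k)"
  have past: "?g \<tau> = run_data \<omega> k \<tau>" if "1 \<le> \<tau>" "\<tau> \<le> Suc n" for \<tau>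
  proof -
    have "\<tau> < t0 + k" using that n by simp
    then show ?thesis using that(1) by (simp add: guessed_data_def)
  qed
  have now: "?g (Suc (Suc n)) = arrival_round (run_state \<omega> k)" using n by (simp add: guessed_data_def)
  have act: "rd_act (?g (Suc (Suc n))) = rd_act (run_data \<omega> k (Suc (Suc n)))"
    unfolding now using dom_run_state[of \<omega> k] n by (simp add: arrival_round_def)
  have cap: "\<forall>i\<in>rd_act (?g (Suc (Suc n))) - rd_act (?g (Suc n)).
      rd_cap (?g (Suc (Suc n))) i = rd_cap (run_data \<omega> k (Suc (Suc n))) i"
  proof
    fix i assume "i \<in> rd_act (?g (Suc (Suc n))) - rd_act (?g (Suc n))"
    then have "i \<in> rd_act (run_data \<omega> (Suc j) (t0 + Suc j))" "i \<notin> rd_act (run_data \<omega> (Suc j) (t0 + j))"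
      using act past[of "Suc n"] n k by auto
    then have "run_state \<omega> k i = Some (rd_cap (run_data \<omega> k (t0 + k)) i)"
      unfolding k by (rule run_state_arrival)
    then show "rd_cap (?g (Suc (Suc n))) i = rd_cap (run_data \<omega> k (Suc (Suc n))) i"
      unfolding now by (simp add: arrival_round_def n(2)[symmetric])
  qed
  have "pol_state ?g \<gamma> (Suc n) = pol_state (run_data \<omega> k) \<gamma> (Suc n)"
    using past act cap by (rule pol_state_Suc_cong)
  then show ?thesis unfolding estimated_target_def run_target_def target_state_def using n by simp
qed

lemma run_action_chasing_strategy:
  "run_action (chasing_strategy \<gamma> t0 cs) k =
     (if k = 0 \<or> cs ! k then freeze_prices (run_state (chasing_strategy \<gamma> t0 cs) k)
      else copy_prices (run_state (chasing_strategy \<gamma> t0 cs) k) (\<gamma> (run_target (chasing_strategy \<gamma> t0 cs) k)))"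
  using estimated_target_correct[of k "chasing_strategy \<gamma> t0 cs"]
  by (simp add: run_action_def chasing_strategy_def)

lemma feasible_oracle_actions:
  assumes "k < rounds"
  shows "feasible (fst (ohist (chasing_strategy \<gamma> t0 cs) adv t0 s0 k))
           (oracle_actions (chasing_strategy \<gamma> t0 cs) adv t0 s0 T ! k)"
  using nth_run_actions[OF assms] feasible_chasing_strategy[OF target_feasible, of "t0 + k"] t0_pos
  by (simp add: oracle_actions_def run_actions_def[symmetric] run_state_def[symmetric] run_action_def)

end

section \<open>Regret analysis\<close>

locale chasing_analysis = chasing_run + gap_potential +
  assumes gap_cap: "m = C * W"
begin

definition round_regret :: "strategy \<Rightarrow> nat \<Rightarrow> real" where
  "round_regret \<omega> j = payment (run_data \<omega> j (t0 + j)) (\<gamma> (run_target \<omega> j))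
                      - payment (run_data \<omega> j (t0 + j)) (run_action \<omega> j)"

definition regret_potential :: "strategy \<Rightarrow> nat \<Rightarrow> real" where
  "regret_potential \<omega> k =
     (\<Sum>j<k. round_regret \<omega> j) + potential (inventory_gap (run_state \<omega> k) (run_target \<omega> k))"

lemma agree_upto_sum_regret:
  assumes "agree_upto \<omega> \<omega>' k"
  shows "(\<Sum>j<k. round_regret \<omega> j) = (\<Sum>j<k. round_regret \<omega>' j)"
proof (rule sum.cong[OF refl])
  fix j assume "j \<in> {..<k}"
  then have "agree_upto \<omega> \<omega>' (Suc j)" "agree_upto \<omega> \<omega>' j"
    using assms agree_upto_mono by auto
  then show "round_regret \<omega> j = round_regret \<omega>' j"
    unfolding round_regret_def
    by (simp add: agree_upto_run_data agree_upto_run_target agree_upto_run_action)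
qed

lemma chasing_strategy_append_agree:
  "length cs = k \<Longrightarrow> agree_upto (chasing_strategy \<gamma> t0 (cs @ bs)) (chasing_strategy \<gamma> t0 cs) k"
  unfolding agree_upto_def by (auto simp: chasing_strategy_def nth_append intro!: ext)

lemma chasing_strategy_take_agree:
  "agree_upto (chasing_strategy \<gamma> t0 cs) (chasing_strategy \<gamma> t0 (take k cs)) k"
  unfolding agree_upto_def by (auto simp: chasing_strategy_def intro!: ext)

lemma inventory_gap_run_le:
  assumes "k < rounds"
  shows "inventory_gap (run_state \<omega> k) (run_target \<omega> k) \<le> m"
  unfolding gap_cap
  using run_data_card[OF assms, of \<omega>] run_target_le_capacity[OF assms, of \<omega>]
    dom_run_state[of \<omega> k] dom_run_target[OF assms, of \<omega>]
  by (intro inventory_gap_le) simp_all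

lemma regret_potential_first: "regret_potential (chasing_strategy \<gamma> t0 cs) 1 \<le> 1 + Y"
proof -
  let ?\<omega> = "chasing_strategy \<gamma> t0 cs" and ?r = "run_data (chasing_strategy \<gamma> t0 cs) 0 t0"
  have first: "0 < rounds" using t0_le by simp
  have facts: "finite (rd_act ?r)" "rd_val ?r {} = 0" "\<forall>B. B \<subseteq> rd_act ?r \<longrightarrow> rd_val ?r B < 1"
    using run_data_finite[OF first, of ?\<omega>] run_data_val_empty[OF first, of ?\<omega>]
      run_data_val_lt_1[OF first, of ?\<omega>] by simp_all
  have "\<forall>i\<in>rd_act ?r. 0 < the (\<gamma> (run_target ?\<omega> 0) i)"
    using target_feasible dom_run_target[OF first, of ?\<omega>] unfolding feasible_def by auto
  then have "payment ?r (\<gamma> (run_target ?\<omega> 0)) < 1" by (rule payment_lt_1[OF facts])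
  moreover have "payment ?r (run_action ?\<omega> 0) = 0"
    using payment_freeze_prices[OF facts] dom_run_state[of ?\<omega> 0]
    by (simp add: run_action_chasing_strategy)
  ultimately have "round_regret ?\<omega> 0 \<le> 1" unfolding round_regret_def by simp
  then show ?thesis unfolding regret_potential_def using add_mono[OF _ potential_le_scale] by simp
qed

lemma regret_potential_step:
  assumes k_pos: "1 \<le> k" and k_lt: "k < rounds" and len: "length cs = k"
  shows "regret_potential (chasing_strategy \<gamma> t0 (cs @ [True])) (Suc k) * e
       + regret_potential (chasing_strategy \<gamma> t0 (cs @ [False])) (Suc k) * (1 - e)
       \<le> regret_potential (chasing_strategy \<gamma> t0 cs) k + e"
proof -
  let ?\<omega> = "chasing_strategy \<gamma> t0 cs"
  define \<omega>' where "\<omega>' b = chasing_strategy \<gamma> t0 (cs @ [b])" for b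
  define r where "r = run_data ?\<omega> k (t0 + k)"
  define sh where "sh = run_state ?\<omega> k"
  define sg where "sg = run_target ?\<omega> k"
  define p where "p = \<gamma> sg"
  define r' where "r' b = run_data (\<omega>' b) (Suc k) (Suc (t0 + k))" for b
  define x where "x b = (if b then freeze_prices sh else copy_prices sh p)" for b
  define S where "S = (\<Sum>j<k. round_regret ?\<omega> j)"
  have agree: "agree_upto (\<omega>' b) ?\<omega> k" for b
    unfolding \<omega>'_def by (rule chasing_strategy_append_agree[OF len])
  have state: "run_state (\<omega>' b) k = sh" and data: "run_data (\<omega>' b) k = run_data ?\<omega> k"
    and target: "run_target (\<omega>' b) k = sg" and past: "(\<Sum>j<k. round_regret (\<omega>' b) j) = S" for b
    using agree_upto_run_state[OF agree] agree_upto_run_data[OF agree] agree_upto_run_target[OF agree]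
      agree_upto_sum_regret[OF agree]
    unfolding sh_def sg_def S_def by auto
  have action: "run_action (\<omega>' b) k = x b" for b
  proof -
    have "run_action (\<omega>' b) k = (if b then freeze_prices (run_state (\<omega>' b) k)
        else copy_prices (run_state (\<omega>' b) k) (\<gamma> (run_target (\<omega>' b) k)))"
      using k_pos len unfolding \<omega>'_def by (simp add: run_action_chasing_strategy nth_append)
    then show ?thesis unfolding state target x_def p_def .
  qed
  have potential_b: "regret_potential (\<omega>' b) (Suc k) = S + (payment r p - payment r (x b)
      + potential (inventory_gap (trans r (r' b) sh (x b)) (trans r (r' b) sg p)))" for b
    unfolding regret_potential_def sum.lessThan_Suc past round_regret_def run_state_Suc run_target_Suc
      state data target action r_def r'_def p_def
    by simp
  have dom_sh: "dom sh = rd_act r" unfolding sh_def r_def by (rule dom_run_state)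
  have dom_sg: "dom sg = rd_act r" unfolding sg_def r_def by (rule dom_run_target[OF k_lt])
  have feas: "feasible sg p" unfolding p_def using target_feasible by simp
  have gap: "inventory_gap sh sg \<le> m" unfolding sh_def sg_def by (rule inventory_gap_run_le[OF k_lt])
  show ?thesis
    using round_drift[OF run_data_finite[OF k_lt, of ?\<omega>, folded r_def]
        run_data_val_empty[OF k_lt, of ?\<omega>, folded r_def] run_data_val_lt_1[OF k_lt, of ?\<omega>, folded r_def]
        dom_sh dom_sg feas gap, of "r' True" "r' False"]
    unfolding potential_b[unfolded \<omega>'_def] regret_potential_def[of ?\<omega> k] S_def[symmetric]
      sh_def[symmetric] sg_def[symmetric] x_def
    by (simp add: algebra_simps)
qed

abbreviation coins :: "nat \<Rightarrow> bool list pmf" where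
  "coins k \<equiv> replicate_pmf k (bernoulli_pmf e)"

lemma expected_regret_potential:
  assumes "1 \<le> k" "k \<le> rounds"
  shows "measure_pmf.expectation (coins k) (\<lambda>cs. regret_potential (chasing_strategy \<gamma> t0 cs) k)
           \<le> 1 + Y + k * e"
  using assms
proof (induction k rule: nat_induct_at_least)
  case base
  have "measure_pmf.expectation (coins 1) (\<lambda>cs. regret_potential (chasing_strategy \<gamma> t0 cs) 1)
      \<le> measure_pmf.expectation (coins 1) (\<lambda>_. 1 + Y)"
    using regret_potential_first by (intro expectation_mono_finite_pmf finite_set_replicate_pmf)
  then show ?case using exploration_pos by simp
next
  case (Suc k)
  have e: "0 \<le> e" "e \<le> 1" using exploration_pos exploration_lt_1 by auto
  let ?P = "\<lambda>cs k. regret_potential (chasing_strategy \<gamma> t0 cs) k"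
  have "measure_pmf.expectation (coins (Suc k)) (\<lambda>cs. ?P cs (Suc k))
      = measure_pmf.expectation (coins k)
          (\<lambda>cs. e * ?P (cs @ [True]) (Suc k) + (1 - e) * ?P (cs @ [False]) (Suc k))"
    by (rule expectation_replicate_bernoulli_Suc[OF e])
  also have "\<dots> \<le> measure_pmf.expectation (coins k) (\<lambda>cs. ?P cs k + e)"
  proof (intro expectation_mono_finite_pmf finite_set_replicate_pmf)
    fix cs assume "cs \<in> set_pmf (coins k)"
    then have "length cs = k" by (rule length_replicate_pmf)
    with Suc.hyps Suc.prems show "e * ?P (cs @ [True]) (Suc k) + (1 - e) * ?P (cs @ [False]) (Suc k) \<le> ?P cs k + e"
      using regret_potential_step[of k cs] by (simp add: mult.commute)
  qed
  also have "\<dots> = measure_pmf.expectation (coins k) (\<lambda>cs. ?P cs k) + e"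
    by (rule expectation_add_const_finite_pmf[OF finite_set_replicate_pmf])
  also have "\<dots> \<le> 1 + Y + Suc k * e" using Suc by (simp add: algebra_simps)
  finally show ?case .
qed

lemma chase_gap_eq_sum_regret:
  assumes "t0 \<le> tf" "tf \<le> T"
  shows "chase_gap \<gamma> \<omega> adv t0 s0 T tf = (\<Sum>j<Suc (tf - t0). round_regret \<omega> j)"
proof -
  have actions: "oracle_actions \<omega> adv t0 s0 T = run_actions \<omega> rounds"
    unfolding oracle_actions_def run_actions_def ..
  have "chase_gap \<gamma> \<omega> adv t0 s0 T tf = (\<Sum>t\<in>{t0..tf}. round_regret \<omega> (t - t0))"
    unfolding chase_gap_def Let_def actions run_data_def[symmetric]
  proof (rule sum.cong[OF refl])
    fix t assume t: "t \<in> {t0..tf}"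
    define j where "j = t - t0"
    have tj: "t = t0 + j" and j: "j < rounds" using t assms unfolding j_def by auto
    have "run_data \<omega> rounds t = run_data \<omega> j (t0 + j)" unfolding tj by (rule run_data_prefix) (use j in auto)
    moreover have "target_state (run_data \<omega> rounds) \<gamma> t = run_target \<omega> j"
      unfolding run_target_def target_state_def tj
      by (rule pol_state_cong) (use j t0_pos in \<open>auto intro!: run_data_prefix\<close>)
    moreover have "run_actions \<omega> rounds ! j = run_action \<omega> j" using j by (rule nth_run_actions)
    ultimately show "payment (run_data \<omega> rounds t) (\<gamma> (target_state (run_data \<omega> rounds) \<gamma> t))
        - payment (run_data \<omega> rounds t) (run_actions \<omega> rounds ! (t - t0)) = round_regret \<omega> (t - t0)"
      unfolding j_def[symmetric] round_regret_def by simp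
  qed
  also have "\<dots> = (\<Sum>j<Suc (tf - t0). round_regret \<omega> j)"
    using assms(1) by (intro sum.reindex_bij_witness[of _ "\<lambda>j. j + t0" "\<lambda>t. t - t0"]) auto
  finally show ?thesis .
qed

lemma expected_chase_gap_le:
  assumes "t0 \<le> tf" "tf \<le> T"
  shows "measure_pmf.expectation (map_pmf (chasing_strategy \<gamma> t0) (coins rounds))
           (\<lambda>\<omega>. chase_gap \<gamma> \<omega> adv t0 s0 T tf) \<le> 1 + Y + T * e"
proof -
  define k where "k = Suc (tf - t0)"
  have k: "k \<le> rounds" "k \<le> T" using assms t0_pos unfolding k_def by auto
  have gap_le: "chase_gap \<gamma> (chasing_strategy \<gamma> t0 cs) adv t0 s0 T tf
      \<le> regret_potential (chasing_strategy \<gamma> t0 (take k cs)) k" for cs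
  proof -
    have "chase_gap \<gamma> (chasing_strategy \<gamma> t0 cs) adv t0 s0 T tf
        = (\<Sum>j<k. round_regret (chasing_strategy \<gamma> t0 cs) j)"
      unfolding k_def by (rule chase_gap_eq_sum_regret[OF assms])
    also have "\<dots> = (\<Sum>j<k. round_regret (chasing_strategy \<gamma> t0 (take k cs)) j)"
      by (rule agree_upto_sum_regret[OF chasing_strategy_take_agree])
    also have "\<dots> \<le> regret_potential (chasing_strategy \<gamma> t0 (take k cs)) k"
      unfolding regret_potential_def using potential_nonneg by simp
    finally show ?thesis .
  qed
  have "measure_pmf.expectation (map_pmf (chasing_strategy \<gamma> t0) (coins rounds))
           (\<lambda>\<omega>. chase_gap \<gamma> \<omega> adv t0 s0 T tf)
      \<le> measure_pmf.expectation (coins rounds) (\<lambda>cs. regret_potential (chasing_strategy \<gamma> t0 (take k cs)) k)"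
    unfolding integral_map_pmf using gap_le by (intro expectation_mono_finite_pmf finite_set_replicate_pmf)
  also have "\<dots> = measure_pmf.expectation (map_pmf (take k) (coins (k + (rounds - k))))
      (\<lambda>cs. regret_potential (chasing_strategy \<gamma> t0 cs) k)"
    by (subst le_add_diff_inverse[OF k(1)]) simp
  also have "\<dots> \<le> 1 + Y + k * e"
    unfolding map_take_replicate_pmf using k by (intro expected_regret_potential) (simp_all add: k_def)
  also have "\<dots> \<le> 1 + Y + T * e" using k exploration_pos by simp
  finally show ?thesis .
qed

end

lemma exploration_rate_tradeoff:
  fixes x :: real and m :: nat
  assumes x1: "1 \<le> x"
  defines "e \<equiv> (1/2) * x powr (-(1/(real m + 1)))"
  shows "0 < e" "e < 1"
    "1 + 1 / ((1 - e) * e ^ m) + x * e \<le> (2 + 2 ^ (m + 1)) * x powr (real m / real (m + 1))"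
proof -
  define b where "b = 1 / (real m + 1)"
  define a where "a = real m / real (m + 1)"
  have ab: "a + b = 1" unfolding a_def b_def by (simp add: field_simps)
  have bm: "real m * b = a" unfolding a_def b_def by simp
  have x0: "0 < x" using x1 by simp
  define P where "P = x powr (- b)"
  have Pb: "x powr b \<ge> 1" using x1 unfolding b_def by (intro ge_one_powr_ge_zero) auto
  have P0: "0 < P" unfolding P_def using x0 by simp
  have P1: "P \<le> 1" unfolding P_def powr_minus using Pb by (simp add: inverse_le_1_iff)
  have ee: "e = P / 2" unfolding e_def P_def b_def by simp
  show e0: "0 < e" using P0 ee by simp
  have eh: "e \<le> 1/2" using P1 ee by simp
  then show "e < 1" by simp
  have c0: "0 < (1 - e) * e ^ m" using e0 eh by simp
  have Pm: "P ^ m = x powr (- a)"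
    unfolding P_def using x0 powr_power[of x "-b" m] bm by simp
  have Xa: "x powr (- a) * x powr a = 1" using x0 by (simp add: powr_minus)
  have Xa1: "1 \<le> x powr a" using x1 unfolding a_def by (intro ge_one_powr_ge_zero) auto
  have em: "e ^ m = (1/2)^m * x powr (- a)" unfolding ee using Pm by (simp add: power_divide)
  have "(1/2)^(m+1) * x powr (- a) \<le> (1 - e) * e ^ m"
  proof -
    have "(1/2)^(m+1) * x powr (- a) = (1/2) * e ^ m" unfolding em by simp
    also have "\<dots> \<le> (1 - e) * e ^ m" using eh e0 by (intro mult_right_mono) auto
    finally show ?thesis .
  qed
  then have "1 / ((1 - e) * e ^ m) \<le> 1 / ((1/2)^(m+1) * x powr (- a))"
    by (intro divide_left_mono) (use x0 c0 in auto)
  also have "\<dots> = 2 ^ (m + 1) * x powr a"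
    using Xa x0 by (simp add: powr_minus field_simps)
  finally have Yb: "1 / ((1 - e) * e ^ m) \<le> 2 ^ (m + 1) * x powr a" .
  have xe: "x * e = (1/2) * x powr a"
  proof -
    have "x * P = x / x powr b" unfolding P_def by (simp add: powr_minus divide_inverse)
    also have "\<dots> = x powr (1 - b)" using x0 by (simp add: powr_diff)
    also have "1 - b = a" using ab by simp
    finally show ?thesis unfolding ee by simp
  qed
  show "1 + 1 / ((1 - e) * e ^ m) + x * e \<le> (2 + 2 ^ (m + 1)) * x powr (real m / real (m + 1))"
    unfolding a_def[symmetric] using Yb xe Xa1 by (simp add: algebra_simps)
qed

lemma chasing_oracle_exists:
  assumes target_feasible: "\<forall>s. feasible s (\<gamma> s)" and t0: "1 \<le> t0" "t0 \<le> T"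
  shows "\<exists>\<Omega> :: strategy pmf. \<forall>adv :: adversary.
          rd_act (adv t0 []) = dom s0 \<and>
          (\<forall>xs. length xs = Suc T - t0 \<longrightarrow> valid_instance C W T (rdata adv t0 xs))
          \<longrightarrow> (\<forall>\<omega>\<in>set_pmf \<Omega>. \<forall>k < Suc T - t0.
                 feasible (fst (ohist \<omega> adv t0 s0 k)) (oracle_actions \<omega> adv t0 s0 T ! k))
            \<and> (\<forall>tf. t0 \<le> tf \<and> tf \<le> T \<longrightarrow>
                 measure_pmf.expectation \<Omega> (\<lambda>\<omega>. chase_gap \<gamma> \<omega> adv t0 s0 T tf)
                   \<le> (2 + 2 ^ (C * W + 1)) * real T powr (real (C * W) / real (C * W + 1)))"
proof -
  define m where "m = C * W"
  define e where "e = (1/2) * real T powr (-(1/(real m + 1)))"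
  define Y where "Y = 1 / ((1 - e) * e ^ m)"
  have T: "1 \<le> real T" using t0 by simp
  note rate = exploration_rate_tradeoff[OF T, of m, folded e_def, folded Y_def]
  have scale: "Y * ((1 - e) * e ^ m) = 1" unfolding Y_def using rate(1,2) by simp
  have analysis: "chasing_analysis C W T \<gamma> t0 s0 adv e Y m"
    if "rd_act (adv t0 []) = dom s0 \<and>
      (\<forall>xs. length xs = Suc T - t0 \<longrightarrow> valid_instance C W T (rdata adv t0 xs))" for adv
    using that target_feasible t0 rate(1,2) scale m_def by unfold_locales auto
  show ?thesis
  proof (intro exI[of _ "map_pmf (chasing_strategy \<gamma> t0) (replicate_pmf (Suc T - t0) (bernoulli_pmf e))"]
      allI impI conjI ballI)
    fix adv \<omega> k
    assume "rd_act (adv t0 []) = dom s0 \<and>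
      (\<forall>xs. length xs = Suc T - t0 \<longrightarrow> valid_instance C W T (rdata adv t0 xs))"
    then interpret chasing_analysis C W T \<gamma> t0 s0 adv e Y m by (rule analysis)
    assume "\<omega> \<in> set_pmf (map_pmf (chasing_strategy \<gamma> t0) (coins rounds))" and "k < rounds"
    then show "feasible (fst (ohist \<omega> adv t0 s0 k)) (oracle_actions \<omega> adv t0 s0 T ! k)"
      using feasible_oracle_actions by auto
  next
    fix adv tf
    assume "rd_act (adv t0 []) = dom s0 \<and>
      (\<forall>xs. length xs = Suc T - t0 \<longrightarrow> valid_instance C W T (rdata adv t0 xs))"
    then interpret chasing_analysis C W T \<gamma> t0 s0 adv e Y m by (rule analysis)
    assume "t0 \<le> tf \<and> tf \<le> T"
    then have "measure_pmf.expectation (map_pmf (chasing_strategy \<gamma> t0) (coins rounds))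
        (\<lambda>\<omega>. chase_gap \<gamma> \<omega> adv t0 s0 T tf) \<le> 1 + Y + T * e"
      by (intro expected_chase_gap_le) auto
    also have "\<dots> \<le> (2 + 2 ^ (m + 1)) * real T powr (real m / real (m + 1))"
      using rate(3) unfolding Y_def by simp
    finally show "measure_pmf.expectation (map_pmf (chasing_strategy \<gamma> t0) (coins rounds))
        (\<lambda>\<omega>. chase_gap \<gamma> \<omega> adv t0 s0 T tf)
          \<le> (2 + 2 ^ (C * W + 1)) * real T powr (real (C * W) / real (C * W + 1))"
      unfolding m_def .
  qed
qed

theorem theorem2:
  shows "\<forall>C W :: nat. \<exists>K :: real. \<forall>(T :: nat) (\<gamma> :: inv \<Rightarrow> prices) (t_init :: nat) (s_init :: inv).
    (\<forall>s. feasible s (\<gamma> s)) \<and> 1 \<le> t_init \<and> t_init \<le> T \<and> finite (dom s_init) \<and> ran s_init \<subseteq> {..C}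
    \<longrightarrow> (\<exists>\<Omega> :: strategy pmf. \<forall>adv :: adversary.
          rd_act (adv t_init []) = dom s_init \<and>
          (\<forall>xs. length xs = Suc T - t_init \<longrightarrow> valid_instance C W T (rdata adv t_init xs))
          \<longrightarrow> (\<forall>\<omega>\<in>set_pmf \<Omega>. \<forall>k < Suc T - t_init.
                 feasible (fst (ohist \<omega> adv t_init s_init k)) (oracle_actions \<omega> adv t_init s_init T ! k))
            \<and> (\<forall>t_final. t_init \<le> t_final \<and> t_final \<le> T \<longrightarrow>
                 measure_pmf.expectation \<Omega> (\<lambda>\<omega>. chase_gap \<gamma> \<omega> adv t_init s_init T t_final)
                   \<le> K * real T powr (real (C * W) / real (C * W + 1))))"
  by (intro allI, rule exI, intro allI impI) (rule chasing_oracle_exists; simp)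

end
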